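(* Let $d\ge1$ and let $G$ be a graph with a nonedge $f=uv$. Then $(G,f)$ has the $d$-SIP if and only if, for each atom $A$ of $G\cup f$ that contains both $u$ and $v$, the pair $(A\setminus f,f)$ has the $d$-SIP.
   Context: A linkage $(G,\ell)$: finite simple graph $G$ and $\ell:E(G)\to\mathbb{R}_{\ge0}$ (squared lengths). A $d$-realization is $p:V(G)\to\mathbb{R}^d$ with $\|p(a)-p(b)\|^2=\ell(ab)$ for all $ab\in E(G)$; $\mathcal{C}^d(G,\ell)$ is the set of these. For a nonedge $f=uv$, $\Omega^d_f(G,\ell)=\{\|p(u)-p(v)\|^2:p\in\mathcal{C}^d(G,\ell)\}$; $(G,f)$ has the $d$-SIP if $\Omega^d_f(G,\ell)$ is convex (empty or a closed interval) for every $\ell$. $G\cup f$ adds $f$ as an edge; $A\setminus f$ deletes the edge $f$. A clique is a set of pairwise adjacent vertices (possibly empty); a clique separator of $H$ is a clique $U$ such that $H-U$ has at least two connected components. A graph is an atom if it is nonempty and has no clique separator; an atom of $H$ is an induced subgraph of $H$ that is an atom and is vertex-maximal with this property. *)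

theory Defs
  imports "HOL-Analysis.Analysis"
begin

definition simple_graph :: "'a set \<Rightarrow> 'a set set \<Rightarrow> bool" where
  "simple_graph V E \<longleftrightarrow> finite V \<and>
     (\<forall>e\<in>E. \<exists>x y. x \<in> V \<and> y \<in> V \<and> x \<noteq> y \<and> e = {x, y})"

definition induced_edges :: "'a set set \<Rightarrow> 'a set \<Rightarrow> 'a set set" where
  "induced_edges E S = {e \<in> E. e \<subseteq> S}"

text \<open>d-realizations of the linkage (G, l), with d given by the finite type 'd
  (so d = CARD('d) \<ge> 1); l gives squared lengths.\<close>
definition realization :: "'a set \<Rightarrow> 'a set set \<Rightarrow> ('a set \<Rightarrow> real) \<Rightarrow> ('a \<Rightarrow> real^'d) \<Rightarrow> bool" where
  "realization V E l p \<longleftrightarrow>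
     (\<forall>a b. {a, b} \<in> E \<longrightarrow> (norm (p a - p b))\<^sup>2 = l {a, b})"

definition Omega :: "'d::finite itself \<Rightarrow> 'a set \<Rightarrow> 'a set set \<Rightarrow> ('a set \<Rightarrow> real) \<Rightarrow> 'a \<Rightarrow> 'a \<Rightarrow> real set" where
  "Omega _ V E l u v =
     {(norm (p u - p v))\<^sup>2 | p :: 'a \<Rightarrow> real^'d. realization V E l p}"

definition has_SIP :: "'d::finite itself \<Rightarrow> 'a set \<Rightarrow> 'a set set \<Rightarrow> 'a \<Rightarrow> 'a \<Rightarrow> bool" where
  "has_SIP D V E u v \<longleftrightarrow>
     (\<forall>l :: 'a set \<Rightarrow> real. (\<forall>e\<in>E. 0 \<le> l e) \<longrightarrow> convex (Omega D V E l u v))"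

definition is_clique :: "'a set \<Rightarrow> 'a set set \<Rightarrow> 'a set \<Rightarrow> bool" where
  "is_clique V E U \<longleftrightarrow> U \<subseteq> V \<and> (\<forall>x\<in>U. \<forall>y\<in>U. x \<noteq> y \<longrightarrow> {x, y} \<in> E)"

definition reachable :: "'a set \<Rightarrow> 'a set set \<Rightarrow> 'a \<Rightarrow> 'a \<Rightarrow> bool" where
  "reachable V E = (\<lambda>x y. x \<in> V \<and> y \<in> V \<and> {x, y} \<in> E)\<^sup>*\<^sup>*"

definition components :: "'a set \<Rightarrow> 'a set set \<Rightarrow> 'a set set" where
  "components V E = {{y \<in> V. reachable V E x y} | x. x \<in> V}"

definition clique_separator :: "'a set \<Rightarrow> 'a set set \<Rightarrow> 'a set \<Rightarrow> bool" where
  "clique_separator V E U \<longleftrightarrow> is_clique V E U \<and>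
     card (components (V - U) (induced_edges E (V - U))) \<ge> 2"

definition is_atom :: "'a set \<Rightarrow> 'a set set \<Rightarrow> bool" where
  "is_atom V E \<longleftrightarrow> V \<noteq> {} \<and> \<not> (\<exists>U. clique_separator V E U)"

definition atom_of :: "'a set \<Rightarrow> 'a set set \<Rightarrow> 'a set \<Rightarrow> bool" where
  "atom_of V E S \<longleftrightarrow> S \<subseteq> V \<and> is_atom S (induced_edges E S) \<and>
     (\<forall>T. S \<subset> T \<and> T \<subseteq> V \<longrightarrow> \<not> is_atom T (induced_edges E T))"

end

theory Submission
  imports Defs
begin

text \<open>
  Realizations glue along clique separators: the two sides agree on the pairwise distances of
  the separating clique, and any congruence between finite point sets of \<open>\<real>\<^sup>d\<close> extends to an
  isometry (compose reflections in perpendicular bisectors).  Hence \<open>\<Omega>\<^sub>f(G, \<ell>)\<close> is the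
  intersection, over the atoms \<open>A\<close> of \<open>G \<union> f\<close>, of the sets of lengths \<open>t\<close> for which \<open>A\<close> is
  realizable when \<open>f\<close> gets length \<open>t\<close>.  An atom missing \<open>u\<close> or \<open>v\<close> contributes \<open>\<emptyset>\<close> or \<open>\<real>\<close>, an atom
  containing both contributes \<open>\<Omega>\<^sub>f(A \<setminus> f, \<ell>)\<close>; this gives sufficiency.

  For necessity, cut \<open>G \<union> f\<close> along a clique separator \<open>K\<close> and keep the side \<open>W\<close> containing the
  atom.  Given realizations of \<open>W\<close> with \<open>u\<close>-\<open>v\<close> distances \<open>\<surd>x\<close> and \<open>\<surd>y\<close>, place every vertex
  outside \<open>W\<close> at one point whose distances to \<open>K\<close> are the same for both realizations: a vertex of
  \<open>K\<close> other than \<open>u, v\<close>, or, if \<open>K \<subseteq> {u, v}\<close>, the point of the line \<open>uv\<close> at distances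
  \<open>(\<surd>x + \<surd>y)/2\<close> and \<open>|\<surd>x - \<surd>y|/2\<close> from \<open>u\<close> and \<open>v\<close>.  This extends both to realizations of
  \<open>G\<close> for one length function, so the SIP of \<open>G\<close> yields every intermediate value for \<open>W\<close>; induct
  on the number of vertices.
\<close>

section \<open>Isometries extending congruences\<close>

definition reflection :: "'v::real_inner \<Rightarrow> 'v \<Rightarrow> 'v" where
  "reflection w d = d - (2 * (d \<bullet> w) / (w \<bullet> w)) *\<^sub>R w"

lemma reflection_diff: "reflection w a - reflection w b = reflection w (a - b)"
  unfolding reflection_def
  by (simp add: inner_diff_left diff_divide_distrib algebra_simps scaleR_diff_left)

lemma norm_reflection: "norm (reflection w d) = norm d"
proof (cases "w = 0")
  case False
  then have "w \<bullet> w \<noteq> 0" by simp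
  then show ?thesis
    unfolding norm_eq reflection_def
    by (simp add: inner_diff_left inner_diff_right field_simps power2_eq_square inner_commute)
qed (simp add: reflection_def)

lemma reflection_orthogonal: "d \<bullet> w = 0 \<Longrightarrow> reflection w d = d"
  by (simp add: reflection_def)

lemma reflection_scaleR_self: "reflection w (c *\<^sub>R w) = - (c *\<^sub>R w)"
  by (cases "w = 0") (simp_all add: reflection_def flip: scaleR_left_diff_distrib)

text \<open>Reflection in the perpendicular bisector of \<open>a\<close> and \<open>b\<close>; the identity if \<open>a = b\<close>,
  since division by zero yields zero.\<close>

definition bisector_reflection :: "'v::real_inner \<Rightarrow> 'v \<Rightarrow> 'v \<Rightarrow> 'v" where
  "bisector_reflection a b q = midpoint a b + reflection (a - b) (q - midpoint a b)"

lemma norm_bisector_reflection_diff: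
  "norm (bisector_reflection a b p - bisector_reflection a b q) = norm (p - q)"
  by (simp add: bisector_reflection_def reflection_diff norm_reflection)

lemma bisector_reflection_left: "bisector_reflection a b a = b"
proof -
  have half: "a - midpoint a b = (1/2) *\<^sub>R (a - b)"
    by (metis add_diff_cancel_left midpoint_plus_self scaleR_half_double scaleR_right_diff_distrib)
  have "bisector_reflection a b a = midpoint a b - (a - midpoint a b)"
    unfolding bisector_reflection_def half reflection_scaleR_self by simp
  also have "\<dots> = (midpoint a b + midpoint a b) - a"
    by (rule diff_diff_eq2)
  finally show ?thesis
    by simp
qed

lemma bisector_reflection_fixed:
  assumes "norm (q - a) = norm (q - b)"
  shows "bisector_reflection a b q = q"
proof -
  have "(q - a) \<bullet> (q - a) = (q - b) \<bullet> (q - b)"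
    using assms by (simp add: norm_eq)
  then have "(q - midpoint a b) \<bullet> (a - b) = 0"
    by (simp add: midpoint_def inner_diff_left inner_diff_right inner_add_left inner_commute algebra_simps)
  then show ?thesis
    by (simp add: bisector_reflection_def reflection_orthogonal)
qed

lemma isometry_extends_congruence:
  fixes x y :: "'k \<Rightarrow> 'v::real_inner"
  assumes "finite K" and "\<forall>i\<in>K. \<forall>j\<in>K. norm (x i - x j) = norm (y i - y j)"
  shows "\<exists>T. (\<forall>a b. norm (T a - T b) = norm (a - b)) \<and> (\<forall>k\<in>K. T (x k) = y k)"
  using assms
proof (induction K rule: finite_induct)
  case empty
  show ?case by (rule exI[of _ id]) simp
next
  case (insert k K)
  then obtain T where iso: "\<forall>a b. norm (T a - T b) = norm (a - b)"
    and TK: "\<forall>j\<in>K. T (x j) = y j"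
    by auto
  define R where "R = bisector_reflection (T (x k)) (y k)"
  have "R (y j) = y j" if "j \<in> K" for j
    unfolding R_def
  proof (rule bisector_reflection_fixed)
    have "norm (y j - T (x k)) = norm (x j - x k)"
      using iso TK that by metis
    also have "\<dots> = norm (y j - y k)"
      using insert.prems that by blast
    finally show "norm (y j - T (x k)) = norm (y j - y k)" .
  qed
  then have "\<forall>j\<in>insert k K. R (T (x j)) = y j"
    using TK by (simp add: R_def bisector_reflection_left)
  moreover have "\<forall>a b. norm (R (T a) - R (T b)) = norm (a - b)"
    using iso by (simp add: R_def norm_bisector_reflection_diff)
  ultimately show ?case by (metis comp_apply)
qed

section \<open>Induced subgraphs, components and atoms\<close>

lemma induced_edges_subset: "induced_edges F X \<subseteq> F"
  by (auto simp: induced_edges_def)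

lemma induced_edges_mono: "X \<subseteq> Y \<Longrightarrow> induced_edges F X \<subseteq> induced_edges F Y"
  by (auto simp: induced_edges_def)

lemma induced_edges_induced_edges:
  "A \<subseteq> W \<Longrightarrow> induced_edges (induced_edges F W) A = induced_edges F A"
  by (auto simp: induced_edges_def)

lemma induced_edges_insert:
  "a \<in> W \<Longrightarrow> b \<in> W \<Longrightarrow> induced_edges (insert {a, b} F) W = insert {a, b} (induced_edges F W)"
  by (auto simp: induced_edges_def)

lemma simple_graph_induced_edges:
  "simple_graph V F \<Longrightarrow> W \<subseteq> V \<Longrightarrow> simple_graph W (induced_edges F W)"
  unfolding simple_graph_def induced_edges_def using finite_subset by fastforce

lemma simple_graph_insert:
  "simple_graph V F \<Longrightarrow> a \<in> V \<Longrightarrow> b \<in> V \<Longrightarrow> a \<noteq> b \<Longrightarrow> simple_graph V (insert {a, b} F)"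
  unfolding simple_graph_def by blast

lemma simple_graph_edgeD: "simple_graph V F \<Longrightarrow> {a, b} \<in> F \<Longrightarrow> a \<in> V \<and> b \<in> V \<and> a \<noteq> b"
  unfolding simple_graph_def by (metis doubleton_eq_iff)

lemma induced_edges_self: "simple_graph V F \<Longrightarrow> induced_edges F V = F"
  unfolding simple_graph_def induced_edges_def by auto

lemma reachable_refl [simp]: "reachable X E x x"
  by (simp add: reachable_def)

lemma reachable_trans: "reachable X E x y \<Longrightarrow> reachable X E y z \<Longrightarrow> reachable X E x z"
  unfolding reachable_def by (rule rtranclp_trans)

lemma reachable_sym: "reachable X E x y \<Longrightarrow> reachable X E y x"
  unfolding reachable_def
proof (induction rule: rtranclp_induct)
  case (step y z)
  then have "z \<in> X \<and> y \<in> X \<and> {z, y} \<in> E"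
    by (simp add: insert_commute)
  then show ?case
    using step.IH by (rule converse_rtranclp_into_rtranclp)
qed simp

lemma reachable_edge:
  "reachable X E x y \<Longrightarrow> y \<in> X \<Longrightarrow> z \<in> X \<Longrightarrow> {y, z} \<in> E \<Longrightarrow> reachable X E x z"
  unfolding reachable_def by (rule rtranclp.rtrancl_into_rtrancl) auto

lemma reachable_mono:
  assumes "reachable X E x y" and "X \<subseteq> Y" and "E \<subseteq> E'"
  shows "reachable Y E' x y"
proof -
  have "(\<lambda>x y. x \<in> X \<and> y \<in> X \<and> {x, y} \<in> E)\<^sup>*\<^sup>* \<le> (\<lambda>x y. x \<in> Y \<and> y \<in> Y \<and> {x, y} \<in> E')\<^sup>*\<^sup>*"
    using assms(2,3) by (intro rtranclp_mono) auto
  then show ?thesis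
    using assms(1) by (auto simp: reachable_def le_fun_def)
qed

definition component_of :: "'a set \<Rightarrow> 'a set set \<Rightarrow> 'a \<Rightarrow> 'a set" where
  "component_of X E x = {y \<in> X. reachable X E x y}"

lemma components_eq_image: "components X E = component_of X E ` X"
  by (auto simp: components_def component_of_def)

lemma component_of_self: "x \<in> X \<Longrightarrow> x \<in> component_of X E x"
  by (simp add: component_of_def)

lemma component_of_eq: "reachable X E x y \<Longrightarrow> component_of X E x = component_of X E y"
  unfolding component_of_def by (meson reachable_sym reachable_trans)

lemma component_of_mono:
  assumes "X \<subseteq> Y"
  shows "component_of X (induced_edges F X) x \<subseteq> component_of Y (induced_edges F Y) x"
proof
  fix y assume "y \<in> component_of X (induced_edges F X) x"
  then have "y \<in> Y" and "reachable X (induced_edges F X) x y"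
    using assms by (auto simp: component_of_def)
  moreover have "induced_edges F X \<subseteq> induced_edges F Y"
    using assms by (rule induced_edges_mono)
  ultimately show "y \<in> component_of Y (induced_edges F Y) x"
    using assms by (auto simp: component_of_def intro: reachable_mono)
qed

lemma card_components_ge_2_iff:
  assumes "finite X" and "x \<in> X"
  shows "2 \<le> card (components X E) \<longleftrightarrow> component_of X E x \<noteq> X"
proof
  assume two: "2 \<le> card (components X E)"
  show "component_of X E x \<noteq> X"
  proof
    assume connected: "component_of X E x = X"
    have same: "component_of X E y = component_of X E x" if "y \<in> X" for y
    proof -
      have "y \<in> component_of X E x"
        using that connected by simp
      then have "reachable X E x y"
        by (simp add: component_of_def)
      then show ?thesis
        by (rule component_of_eq[symmetric])
    qed
    have "components X E = (\<lambda>_. component_of X E x) ` X"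
      unfolding components_eq_image by (intro image_cong refl same)
    also have "\<dots> = {component_of X E x}"
      using assms(2) by (rule image_constant)
    finally show False
      using two by simp
  qed
next
  assume "component_of X E x \<noteq> X"
  then obtain y where y: "y \<in> X" "y \<notin> component_of X E x"
    by (auto simp: component_of_def)
  then have "component_of X E x \<noteq> component_of X E y"
    using component_of_self by metis
  moreover have "card {component_of X E x, component_of X E y} \<le> card (components X E)"
    using assms y(1) by (intro card_mono) (auto simp: components_eq_image)
  ultimately show "2 \<le> card (components X E)"
    by simp
qed

lemma atom_minus_clique_connected:
  assumes "finite A" and "is_atom A (induced_edges F A)"
    and "\<forall>x\<in>K. \<forall>y\<in>K. x \<noteq> y \<longrightarrow> {x, y} \<in> F" and "x \<in> A - K"
  shows "component_of (A - K) (induced_edges F (A - K)) x = A - K"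
proof -
  have "is_clique A (induced_edges F A) (A \<inter> K)"
    using assms(3) by (auto simp: is_clique_def induced_edges_def)
  then have "\<not> 2 \<le> card (components (A - A \<inter> K) (induced_edges (induced_edges F A) (A - A \<inter> K)))"
    using assms(2) unfolding is_atom_def clique_separator_def by blast
  moreover have "A - A \<inter> K = A - K"
    by blast
  ultimately have "\<not> 2 \<le> card (components (A - K) (induced_edges F (A - K)))"
    by (simp add: induced_edges_induced_edges)
  then show ?thesis
    using card_components_ge_2_iff[of "A - K" x] assms(1,4) by simp
qed

lemma clique_separator_side:
  assumes "simple_graph V F" and "clique_separator V F K" and "x \<in> V - K"
  defines "W \<equiv> K \<union> component_of (V - K) (induced_edges F (V - K)) x"
  shows "x \<in> W" and "K \<subseteq> W" and "W \<subset> V"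
    and "\<And>a b. {a, b} \<in> F \<Longrightarrow> a \<notin> W \<Longrightarrow> b \<in> W \<Longrightarrow> b \<in> K"
proof -
  let ?C = "component_of (V - K) (induced_edges F (V - K)) x"
  have fin: "finite (V - K)"
    using assms(1) by (simp add: simple_graph_def)
  show "x \<in> W" "K \<subseteq> W"
    using assms(3) by (auto simp: W_def component_of_self)
  have "?C \<noteq> V - K"
    using assms(2) card_components_ge_2_iff[OF fin assms(3)] by (simp add: clique_separator_def)
  moreover have "?C \<subseteq> V - K" and "K \<subseteq> V"
    using assms(2) by (auto simp: component_of_def clique_separator_def is_clique_def)
  ultimately show "W \<subset> V"
    by (auto simp: W_def)
  fix a b assume ab: "{a, b} \<in> F" "a \<notin> W" "b \<in> W"
  show "b \<in> K"
  proof (rule ccontr)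
    assume "b \<notin> K"
    then have "b \<in> ?C"
      using ab(3) by (simp add: W_def)
    moreover have "a \<in> V - K" "{b, a} \<in> induced_edges F (V - K)"
      using ab \<open>b \<in> ?C\<close> simple_graph_edgeD[OF assms(1) ab(1)]
      by (auto simp: W_def component_of_def induced_edges_def insert_commute)
    ultimately have "a \<in> ?C"
      by (auto simp: component_of_def intro: reachable_edge)
    then show False
      using ab(2) by (simp add: W_def)
  qed
qed

lemma clique_separator_outside:
  assumes "clique_separator V F K"
  shows "\<exists>x. x \<in> V - K"
proof (rule ccontr)
  assume "\<nexists>x. x \<in> V - K"
  then have "components (V - K) (induced_edges F (V - K)) = {}"
    by (auto simp: components_def)
  then show False
    using assms by (simp add: clique_separator_def)
qed

lemma clique_separator_split:
  assumes "simple_graph V F" and "clique_separator V F K"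
  obtains W1 W2 where "W1 \<subset> V" and "W2 \<subset> V" and "W1 \<inter> W2 = K"
    and "\<forall>a b. {a, b} \<in> F \<longrightarrow> {a, b} \<subseteq> W1 \<or> {a, b} \<subseteq> W2"
proof -
  obtain x where x: "x \<in> V - K"
    using clique_separator_outside[OF assms(2)] by blast
  define W where "W = K \<union> component_of (V - K) (induced_edges F (V - K)) x"
  note side = clique_separator_side[OF assms x, folded W_def]
  define W' where "W' = (V - W) \<union> K"
  have covered: "\<forall>a b. {a, b} \<in> F \<longrightarrow> {a, b} \<subseteq> W \<or> {a, b} \<subseteq> W'"
  proof (intro allI impI)
    fix a b assume ab: "{a, b} \<in> F"
    have "a \<in> V" "b \<in> V"
      using simple_graph_edgeD[OF assms(1) ab] by auto
    moreover have "b \<in> K" if "a \<notin> W" "b \<in> W"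
      using side(4)[OF ab that] .
    moreover have "a \<in> K" if "b \<notin> W" "a \<in> W"
      using side(4)[of b a] ab that by (simp add: insert_commute)
    ultimately show "{a, b} \<subseteq> W \<or> {a, b} \<subseteq> W'"
      by (auto simp: W'_def)
  qed
  have "W' \<subset> V"
    using side(1-3) x by (auto simp: W'_def)
  moreover have "W \<inter> W' = K"
    using side(2) by (auto simp: W'_def)
  ultimately show ?thesis
    by (rule that[OF side(3) _ _ covered])
qed

lemma atom_of_exists_superset:
  assumes "finite V" and "A \<subseteq> V" and "is_atom A (induced_edges F A)"
  shows "\<exists>T. A \<subseteq> T \<and> atom_of V F T"
proof -
  define S where "S = {T. A \<subseteq> T \<and> T \<subseteq> V \<and> is_atom T (induced_edges F T)}"
  have "finite S" "A \<in> S"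
    using assms by (auto simp: S_def)
  then obtain T where T: "T \<in> S" "\<forall>T'\<in>S. T \<subseteq> T' \<longrightarrow> T = T'"
    using finite_has_maximal by blast
  then have "atom_of V F T"
    unfolding atom_of_def S_def by blast
  then show ?thesis
    using T(1) by (auto simp: S_def)
qed

lemma atom_of_induced:
  assumes "atom_of V F A" and "A \<subseteq> W" and "W \<subseteq> V"
  shows "atom_of W (induced_edges F W) A"
  unfolding atom_of_def
proof (intro conjI allI impI)
  show "A \<subseteq> W"
    by fact
  show "is_atom A (induced_edges (induced_edges F W) A)"
    using assms(1,2) by (simp add: atom_of_def induced_edges_induced_edges)
  fix T assume T: "A \<subset> T \<and> T \<subseteq> W"
  then have "\<not> is_atom T (induced_edges F T)"
    using assms(1,3) unfolding atom_of_def by blast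
  then show "\<not> is_atom T (induced_edges (induced_edges F W) T)"
    using T by (simp add: induced_edges_induced_edges)
qed

lemma atom_of_atom_iff:
  assumes "simple_graph V F" and "is_atom V F"
  shows "atom_of V F A \<longleftrightarrow> A = V"
proof
  assume A: "atom_of V F A"
  show "A = V"
  proof (rule ccontr)
    assume "A \<noteq> V"
    then have "A \<subset> V"
      using A by (auto simp: atom_of_def)
    then have "\<not> is_atom V (induced_edges F V)"
      using A by (auto simp: atom_of_def)
    then show False
      using assms by (simp add: induced_edges_self)
  qed
next
  assume "A = V"
  then show "atom_of V F A"
    using assms by (auto simp: atom_of_def induced_edges_self)
qed

lemma atom_in_clique_separated_side:
  assumes "simple_graph V F" and "atom_of V F A" and "clique_separator V F K"
  obtains W where "A \<subseteq> W" and "W \<subset> V" and "K \<subseteq> W"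
    and "\<forall>a b. {a, b} \<in> F \<longrightarrow> a \<notin> W \<longrightarrow> b \<in> W \<longrightarrow> b \<in> K"
proof -
  have fin: "finite V"
    using assms(1) by (simp add: simple_graph_def)
  have AV: "A \<subseteq> V" and atom: "is_atom A (induced_edges F A)"
    using assms(2) by (auto simp: atom_of_def)
  obtain x where x: "x \<in> V - K" and xA: "A - K \<noteq> {} \<Longrightarrow> x \<in> A - K"
  proof (cases "A - K = {}")
    case True
    obtain x where "x \<in> V - K"
      using clique_separator_outside[OF assms(3)] by blast
    then show ?thesis
      using True by (intro that) auto
  next
    case False
    then obtain x where "x \<in> A - K"
      by blast
    then show ?thesis
      using AV by (intro that) auto
  qed
  define W where "W = K \<union> component_of (V - K) (induced_edges F (V - K)) x"
  note side = clique_separator_side[OF assms(1,3) x, folded W_def]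
  have "A - K \<subseteq> W"
  proof (cases "A - K = {}")
    case False
    have "\<forall>x\<in>K. \<forall>y\<in>K. x \<noteq> y \<longrightarrow> {x, y} \<in> F"
      using assms(3) by (simp add: clique_separator_def is_clique_def)
    then have "A - K = component_of (A - K) (induced_edges F (A - K)) x"
      using atom_minus_clique_connected[OF finite_subset[OF AV fin] atom _ xA[OF False]] by simp
    also have "\<dots> \<subseteq> component_of (V - K) (induced_edges F (V - K)) x"
      using AV by (intro component_of_mono) blast
    finally show ?thesis
      by (auto simp: W_def)
  qed auto
  then have "A \<subseteq> W"
    using side(2) by blast
  moreover have "\<forall>a b. {a, b} \<in> F \<longrightarrow> a \<notin> W \<longrightarrow> b \<in> W \<longrightarrow> b \<in> K"
    using side(4) by blast
  ultimately show ?thesis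
    using side(2,3) by (intro that) auto
qed

section \<open>Gluing realizations along clique separators\<close>

lemma realization_mono: "realization V E l p \<Longrightarrow> E' \<subseteq> E \<Longrightarrow> realization W E' l p"
  by (auto simp: realization_def)

lemma realization_edge_nonneg: "realization V E l p \<Longrightarrow> {a, b} \<in> E \<Longrightarrow> 0 \<le> l {a, b}"
  by (metis realization_def zero_le_power2)

lemma realization_fun_upd_edge:
  assumes "{u, v} \<in> F"
  shows "realization V F (l({u, v} := t)) p \<longleftrightarrow>
    realization V (F - {{u, v}}) l p \<and> (norm (p u - p v))\<^sup>2 = t"
proof
  assume "realization V F (l({u, v} := t)) p"
  then show "realization V (F - {{u, v}}) l p \<and> (norm (p u - p v))\<^sup>2 = t"
    using assms unfolding realization_def by (metis DiffD1 DiffD2 fun_upd_apply fun_upd_same singletonI)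
next
  assume p: "realization V (F - {{u, v}}) l p \<and> (norm (p u - p v))\<^sup>2 = t"
  show "realization V F (l({u, v} := t)) p"
    unfolding realization_def
  proof (intro allI impI)
    fix a b assume ab: "{a, b} \<in> F"
    show "(norm (p a - p b))\<^sup>2 = (l({u, v} := t)) {a, b}"
    proof (cases "{a, b} = {u, v}")
      case True
      then have "norm (p a - p b) = norm (p u - p v)"
        by (auto simp: doubleton_eq_iff norm_minus_commute)
      then show ?thesis
        using True p by simp
    next
      case False
      then show ?thesis
        using p ab unfolding realization_def by simp
    qed
  qed
qed

lemma realization_fun_upd_nonedge:
  "f \<notin> F \<Longrightarrow> realization V F (l(f := t)) p \<longleftrightarrow> realization V F l p"
  unfolding realization_def by (metis fun_upd_other)

lemma realizations_congruent_on_clique: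
  assumes "realization V1 E1 l p1" and "realization V2 E2 l p2"
    and "\<forall>i\<in>K. \<forall>j\<in>K. i \<noteq> j \<longrightarrow> {i, j} \<in> E1 \<inter> E2"
  shows "\<forall>i\<in>K. \<forall>j\<in>K. norm (p1 i - p1 j) = norm (p2 i - p2 j)"
proof (intro ballI)
  fix i j assume "i \<in> K" "j \<in> K"
  show "norm (p1 i - p1 j) = norm (p2 i - p2 j)"
  proof (cases "i = j")
    case False
    then have "(norm (p1 i - p1 j))\<^sup>2 = (norm (p2 i - p2 j))\<^sup>2"
      using assms \<open>i \<in> K\<close> \<open>j \<in> K\<close> by (simp add: realization_def)
    then show ?thesis
      by simp
  qed simp
qed

lemma realization_glue_along_clique:
  fixes p1 p2 :: "'a \<Rightarrow> real^'d"
  assumes "finite (W1 \<inter> W2)"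
    and "\<forall>i\<in>W1 \<inter> W2. \<forall>j\<in>W1 \<inter> W2. i \<noteq> j \<longrightarrow> {i, j} \<in> F"
    and covered: "\<forall>a b. {a, b} \<in> F \<longrightarrow> {a, b} \<subseteq> W1 \<or> {a, b} \<subseteq> W2"
    and p1: "realization W1 (induced_edges F W1) l p1"
    and p2: "realization W2 (induced_edges F W2) l p2"
  shows "\<exists>p :: 'a \<Rightarrow> real^'d. realization V F l p"
proof -
  have "\<forall>i\<in>W1 \<inter> W2. \<forall>j\<in>W1 \<inter> W2. i \<noteq> j \<longrightarrow> {i, j} \<in> induced_edges F W2 \<inter> induced_edges F W1"
    using assms(2) by (auto simp: induced_edges_def)
  then obtain T where iso: "\<forall>a b. norm (T a - T b) = norm (a - b)"
    and T: "\<forall>k\<in>W1 \<inter> W2. T (p2 k) = p1 k"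
    using isometry_extends_congruence[OF assms(1) realizations_congruent_on_clique[OF p2 p1]]
    by blast
  define p where "p x = (if x \<in> W1 then p1 x else T (p2 x))" for x
  have p_W2: "p x = T (p2 x)" if "x \<in> W2" for x
    using that T by (simp add: p_def)
  have "realization V F l p"
    unfolding realization_def
  proof (intro allI impI)
    fix a b assume ab: "{a, b} \<in> F"
    consider "{a, b} \<subseteq> W1" | "{a, b} \<subseteq> W2"
      using covered ab by blast
    then show "(norm (p a - p b))\<^sup>2 = l {a, b}"
    proof cases
      case 1
      then have "{a, b} \<in> induced_edges F W1"
        using ab by (simp add: induced_edges_def)
      then show ?thesis
        using p1 1 by (simp add: realization_def p_def)
    next
      case 2
      then have "{a, b} \<in> induced_edges F W2"
        using ab by (simp add: induced_edges_def)
      then show ?thesis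
        using p2 2 iso by (simp add: realization_def p_W2)
    qed
  qed
  then show ?thesis
    by blast
qed

lemma realization_atoms_of_induced:
  assumes "finite V" and "U \<subseteq> V"
    and "\<And>A. atom_of V F A \<Longrightarrow> \<exists>p :: 'a \<Rightarrow> real^'d. realization A (induced_edges F A) l p"
    and "atom_of U (induced_edges F U) A"
  shows "\<exists>p :: 'a \<Rightarrow> real^'d. realization A (induced_edges (induced_edges F U) A) l p"
proof -
  have AU: "A \<subseteq> U" and atom: "is_atom A (induced_edges F A)"
    using assms(4) by (auto simp: atom_of_def induced_edges_induced_edges)
  have "A \<subseteq> V"
    using AU assms(2) by blast
  then obtain T where AT: "A \<subseteq> T" and "atom_of V F T"
    using atom_of_exists_superset[OF assms(1) _ atom] by blast
  then obtain p :: "'a \<Rightarrow> real^'d" where "realization T (induced_edges F T) l p"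
    using assms(3) by blast
  then have "realization A (induced_edges (induced_edges F U) A) l p"
    using AT AU by (simp add: induced_edges_induced_edges realization_mono[OF _ induced_edges_mono])
  then show ?thesis
    by blast
qed

lemma realization_from_atoms:
  fixes l :: "'a set \<Rightarrow> real"
  assumes "simple_graph V F"
    and "\<And>A. atom_of V F A \<Longrightarrow> \<exists>p :: 'a \<Rightarrow> real^'d. realization A (induced_edges F A) l p"
  shows "\<exists>p :: 'a \<Rightarrow> real^'d. realization V F l p"
  using assms
proof (induction "card V" arbitrary: V F rule: less_induct)
  case less
  have fin: "finite V"
    using less.prems(1) by (simp add: simple_graph_def)
  show ?case
  proof (cases "\<exists>K. clique_separator V F K")
    case False
    show ?thesis
    proof (cases "V = {}")
      case True
      then have "F = {}"
        using less.prems(1) by (auto simp: simple_graph_def)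
      then show ?thesis
        by (intro exI[of _ "\<lambda>_. 0"]) (simp add: realization_def)
    next
      case nonempty: False
      then have "is_atom V F"
        using False by (simp add: is_atom_def)
      then have "atom_of V F V"
        using atom_of_atom_iff[OF less.prems(1)] by blast
      then show ?thesis
        using less.prems(2)[of V] by (simp add: induced_edges_self[OF less.prems(1)])
    qed
  next
    case True
    then obtain K where K: "clique_separator V F K"
      by blast
    then obtain W1 W2 where "W1 \<subset> V" and "W2 \<subset> V" and "W1 \<inter> W2 = K"
      and covered: "\<forall>a b. {a, b} \<in> F \<longrightarrow> {a, b} \<subseteq> W1 \<or> {a, b} \<subseteq> W2"
      using clique_separator_split[OF less.prems(1)] by blast
    have part: "\<exists>p :: 'a \<Rightarrow> real^'d. realization U (induced_edges F U) l p" if "U \<subset> V" for U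
    proof (rule less.hyps)
      show "card U < card V"
        using fin that by (rule psubset_card_mono)
      show "simple_graph U (induced_edges F U)"
        using less.prems(1) that by (simp add: simple_graph_induced_edges)
      show "\<exists>p :: 'a \<Rightarrow> real^'d. realization A (induced_edges (induced_edges F U) A) l p"
        if "atom_of U (induced_edges F U) A" for A
        using \<open>U \<subset> V\<close> by (intro realization_atoms_of_induced[OF fin _ less.prems(2) that]) blast
    qed
    obtain p1 :: "'a \<Rightarrow> real^'d" where p1: "realization W1 (induced_edges F W1) l p1"
      using part \<open>W1 \<subset> V\<close> by blast
    obtain p2 :: "'a \<Rightarrow> real^'d" where p2: "realization W2 (induced_edges F W2) l p2"
      using part \<open>W2 \<subset> V\<close> by blast
    have "finite K" and "\<forall>i\<in>K. \<forall>j\<in>K. i \<noteq> j \<longrightarrow> {i, j} \<in> F"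
      using K fin by (auto simp: clique_separator_def is_clique_def finite_subset)
    then show ?thesis
      using \<open>W1 \<inter> W2 = K\<close> by (intro realization_glue_along_clique[OF _ _ covered p1 p2]) simp_all
  qed
qed

section \<open>From the atoms to the graph\<close>

lemma Omega_eq_Inter_atoms:
  fixes D :: "'d::finite itself"
  assumes "simple_graph V E" and "u \<in> V" and "v \<in> V" and "u \<noteq> v" and "{u, v} \<notin> E"
  shows "Omega D V E l u v =
    (\<Inter>A\<in>{A. atom_of V (insert {u, v} E) A}.
       {t. \<exists>p :: 'a \<Rightarrow> real^'d. realization A (induced_edges (insert {u, v} E) A) (l({u, v} := t)) p})"
proof (rule set_eqI)
  fix t
  let ?F = "insert {u, v} E"
  have "t \<in> Omega D V E l u v \<longleftrightarrow> (\<exists>p :: 'a \<Rightarrow> real^'d. realization V E l p \<and> (norm (p u - p v))\<^sup>2 = t)"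
    by (auto simp: Omega_def)
  also have "\<dots> \<longleftrightarrow> (\<exists>p :: 'a \<Rightarrow> real^'d. realization V ?F (l({u, v} := t)) p)"
  proof -
    have "?F - {{u, v}} = E"
      using assms(5) by auto
    then show ?thesis
      using realization_fun_upd_edge[of u v ?F V l t] by auto
  qed
  also have "\<dots> \<longleftrightarrow> (\<forall>A. atom_of V ?F A \<longrightarrow>
      (\<exists>p :: 'a \<Rightarrow> real^'d. realization A (induced_edges ?F A) (l({u, v} := t)) p))"
    using realization_from_atoms[OF simple_graph_insert[OF assms(1-4)]]
      realization_mono[OF _ induced_edges_subset]
    by meson
  finally show "t \<in> Omega D V E l u v \<longleftrightarrow> t \<in> (\<Inter>A\<in>{A. atom_of V ?F A}.
       {t. \<exists>p :: 'a \<Rightarrow> real^'d. realization A (induced_edges ?F A) (l({u, v} := t)) p})"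
    by simp
qed

lemma has_SIP_if_atoms:
  fixes D :: "'d::finite itself"
  assumes "simple_graph V E" and "u \<in> V" and "v \<in> V" and "u \<noteq> v" and "{u, v} \<notin> E"
    and atoms: "\<forall>A. atom_of V (insert {u, v} E) A \<and> u \<in> A \<and> v \<in> A \<longrightarrow>
       has_SIP D A (induced_edges (insert {u, v} E) A - {{u, v}}) u v"
  shows "has_SIP D V E u v"
  unfolding has_SIP_def
proof (intro allI impI)
  fix l :: "'a set \<Rightarrow> real"
  assume nonneg: "\<forall>e\<in>E. 0 \<le> l e"
  let ?F = "insert {u, v} E"
  have "convex {t. \<exists>p :: 'a \<Rightarrow> real^'d. realization A (induced_edges ?F A) (l({u, v} := t)) p}"
    if A: "atom_of V ?F A" for A
  proof (cases "u \<in> A \<and> v \<in> A")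
    case True
    then have "{t. \<exists>p :: 'a \<Rightarrow> real^'d. realization A (induced_edges ?F A) (l({u, v} := t)) p}
        = Omega D A (induced_edges ?F A - {{u, v}}) l u v"
      using realization_fun_upd_edge[of u v "induced_edges ?F A" A l]
      by (auto simp: Omega_def induced_edges_def)
    moreover have "\<forall>e\<in>induced_edges ?F A - {{u, v}}. 0 \<le> l e"
      using nonneg by (auto simp: induced_edges_def)
    ultimately show ?thesis
      using atoms A True by (simp add: has_SIP_def)
  next
    case False
    then have "{u, v} \<notin> induced_edges ?F A"
      by (auto simp: induced_edges_def)
    then have "{t. \<exists>p :: 'a \<Rightarrow> real^'d. realization A (induced_edges ?F A) (l({u, v} := t)) p}
        = {t. \<exists>p :: 'a \<Rightarrow> real^'d. realization A (induced_edges ?F A) l p}"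
      by (simp add: realization_fun_upd_nonedge)
    then show ?thesis
      by (cases "\<exists>p :: 'a \<Rightarrow> real^'d. realization A (induced_edges ?F A) l p") simp_all
  qed
  then show "convex (Omega D V E l u v)"
    unfolding Omega_eq_Inter_atoms[OF assms(1-5)] by (intro convex_INT) blast
qed

section \<open>From the graph to its atoms\<close>

lemma point_at_distance_on_line:
  fixes a b :: "'v::{real_normed_vector, perfect_space}"
  assumes "0 \<le> \<alpha>"
  shows "\<exists>z. norm (z - a) = \<alpha> \<and> norm (z - b) = \<bar>\<alpha> - norm (a - b)\<bar>"
proof (cases "a = b")
  case True
  obtain e :: 'v where "norm e = \<alpha>"
    using vector_choose_size assms by blast
  then show ?thesis
    using True assms by (intro exI[of _ "a + e"]) simp
next
  case False
  define n where "n = norm (b - a)"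
  have n: "n > 0"
    using False by (simp add: n_def)
  define z where "z = a + (\<alpha> / n) *\<^sub>R (b - a)"
  have za: "norm (z - a) = \<alpha>"
    using n assms by (simp add: z_def n_def)
  have "z - b = (\<alpha> / n - 1) *\<^sub>R (b - a)"
    by (simp add: z_def algebra_simps)
  then have "norm (z - b) = \<bar>\<alpha> / n - 1\<bar> * n"
    by (simp add: n_def)
  also have "\<dots> = \<bar>(\<alpha> / n - 1) * n\<bar>"
    using n by (simp add: abs_mult)
  also have "\<dots> = \<bar>\<alpha> - n\<bar>"
    using n by (simp add: left_diff_distrib)
  finally have "norm (z - b) = \<bar>\<alpha> - norm (a - b)\<bar>"
    by (simp add: n_def norm_minus_commute)
  with za show ?thesis
    by blast
qed

lemma realization_cone_extension:
  assumes p: "realization W (induced_edges E W) l p"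
    and z: "\<forall>b\<in>Q. (norm (z - p b))\<^sup>2 = g b"
    and boundary: "\<And>a b. {a, b} \<in> E \<Longrightarrow> a \<notin> W \<Longrightarrow> b \<in> W \<Longrightarrow> b \<in> Q"
  shows "realization V E (\<lambda>e. if e \<subseteq> W then l e else sum g (e \<inter> W))
    (\<lambda>x. if x \<in> W then p x else z)"
  unfolding realization_def
proof (intro allI impI)
  fix a b assume ab: "{a, b} \<in> E"
  have ba: "{b, a} \<in> E"
    using ab by (simp add: insert_commute)
  consider "a \<in> W" "b \<in> W" | "a \<in> W" "b \<notin> W" | "a \<notin> W" "b \<in> W" | "a \<notin> W" "b \<notin> W"
    by blast
  then show "(norm ((if a \<in> W then p a else z) - (if b \<in> W then p b else z)))\<^sup>2 =
      (if {a, b} \<subseteq> W then l {a, b} else sum g ({a, b} \<inter> W))"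
  proof cases
    case 1
    then have "{a, b} \<in> induced_edges E W"
      using ab by (simp add: induced_edges_def)
    then show ?thesis
      using p 1 by (simp add: realization_def)
  next
    case 2
    then have "a \<in> Q" and "{a, b} \<inter> W = {a}"
      using boundary[OF ba] by auto
    then show ?thesis
      using z 2 by (simp add: norm_minus_commute)
  next
    case 3
    then have "b \<in> Q" and "{a, b} \<inter> W = {b}"
      using boundary[OF ab] by auto
    then show ?thesis
      using z 3 by simp
  next
    case 4
    then show ?thesis
      by simp
  qed
qed

lemma common_apex_lengths:
  fixes l :: "'a set \<Rightarrow> real" and s r :: real
  assumes "Q \<subseteq> W" and clique: "\<forall>x\<in>Q. \<forall>y\<in>Q. x \<noteq> y \<longrightarrow> {x, y} \<in> insert {u, v} E"
    and "0 \<le> s" and "0 \<le> r"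
  shows "\<exists>g. \<forall>p :: 'a \<Rightarrow> real^'d.
    realization W (induced_edges E W) l p \<and> (norm (p u - p v) = s \<or> norm (p u - p v) = r) \<longrightarrow>
    (\<exists>z. \<forall>b\<in>Q. (norm (z - p b))\<^sup>2 = g b)"
proof -
  consider (apex) k where "k \<in> Q" "k \<noteq> u" "k \<noteq> v" | (single) w where "Q \<subseteq> {w}" | (pair) "Q = {u, v}"
    by blast
  then show ?thesis
  proof cases
    case apex
    show ?thesis
    proof (rule exI[of _ "\<lambda>b. if b = k then 0 else l {k, b}"], intro allI impI)
      fix p :: "'a \<Rightarrow> real^'d"
      assume "realization W (induced_edges E W) l p \<and> (norm (p u - p v) = s \<or> norm (p u - p v) = r)"
      then have p: "realization W (induced_edges E W) l p"
        by blast
      have "(norm (p k - p b))\<^sup>2 = (if b = k then 0 else l {k, b})" if "b \<in> Q" for b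
      proof (cases "b = k")
        case False
        then have "{k, b} \<in> insert {u, v} E" and "{k, b} \<noteq> {u, v}"
          using clique apex that by (auto simp: doubleton_eq_iff)
        then have "{k, b} \<in> induced_edges E W"
          using assms(1) apex(1) that by (auto simp: induced_edges_def)
        then show ?thesis
          using p False by (simp add: realization_def)
      qed simp
      then show "\<exists>z. \<forall>b\<in>Q. (norm (z - p b))\<^sup>2 = (if b = k then 0 else l {k, b})"
        by blast
    qed
  next
    case single
    show ?thesis
    proof (rule exI[of _ "\<lambda>_. 0"], intro allI impI)
      fix p :: "'a \<Rightarrow> real^'d"
      show "\<exists>z. \<forall>b\<in>Q. (norm (z - p b))\<^sup>2 = 0"
        using single by (intro exI[of _ "p w"]) auto
    qed
  next
    case pair
    define \<alpha> where "\<alpha> = (s + r) / 2"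
    define \<beta> where "\<beta> = \<bar>s - r\<bar> / 2"
    show ?thesis
    proof (rule exI[of _ "\<lambda>b. if b = u then \<alpha>\<^sup>2 else \<beta>\<^sup>2"], intro allI impI)
      fix p :: "'a \<Rightarrow> real^'d"
      assume "realization W (induced_edges E W) l p \<and> (norm (p u - p v) = s \<or> norm (p u - p v) = r)"
      then have "\<bar>\<alpha> - norm (p u - p v)\<bar> = \<beta>"
        by (auto simp: \<alpha>_def \<beta>_def)
      moreover obtain z where "norm (z - p u) = \<alpha>" "norm (z - p v) = \<bar>\<alpha> - norm (p u - p v)\<bar>"
        using point_at_distance_on_line assms(3,4) by (metis \<alpha>_def divide_nonneg_pos add_nonneg_nonneg zero_less_numeral)
      ultimately show "\<exists>z. \<forall>b\<in>Q. (norm (z - p b))\<^sup>2 = (if b = u then \<alpha>\<^sup>2 else \<beta>\<^sup>2)"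
        using pair by auto
    qed
  qed
qed

lemma has_SIP_induced_edges:
  fixes D :: "'d::finite itself"
  assumes sip: "has_SIP D V E u v" and "u \<in> W" and "v \<in> W"
    and doubletons: "\<forall>e\<in>E. \<exists>a b. e = {a, b}"
    and boundary: "\<And>a b. {a, b} \<in> E \<Longrightarrow> a \<notin> W \<Longrightarrow> b \<in> W \<Longrightarrow> b \<in> Q"
    and "Q \<subseteq> W" and "\<forall>x\<in>Q. \<forall>y\<in>Q. x \<noteq> y \<longrightarrow> {x, y} \<in> insert {u, v} E"
  shows "has_SIP D W (induced_edges E W) u v"
  unfolding has_SIP_def
proof (intro allI impI convexI)
  fix l :: "'a set \<Rightarrow> real" and x y \<mu> \<nu> :: real
  assume x: "x \<in> Omega D W (induced_edges E W) l u v"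
    and y: "y \<in> Omega D W (induced_edges E W) l u v"
    and \<mu>\<nu>: "0 \<le> \<mu>" "0 \<le> \<nu>" "\<mu> + \<nu> = 1"
  obtain px :: "'a \<Rightarrow> real^'d" where px: "realization W (induced_edges E W) l px"
    and px_uv: "norm (px u - px v) = sqrt x"
    using x by (auto simp: Omega_def)
  obtain py :: "'a \<Rightarrow> real^'d" where py: "realization W (induced_edges E W) l py"
    and py_uv: "norm (py u - py v) = sqrt y"
    using y by (auto simp: Omega_def)
  have "0 \<le> x" "0 \<le> y"
    using x y by (auto simp: Omega_def)
  then have "0 \<le> sqrt x" "0 \<le> sqrt y"
    by simp_all
  then obtain g where g: "\<forall>p :: 'a \<Rightarrow> real^'d.
      realization W (induced_edges E W) l p \<and> (norm (p u - p v) = sqrt x \<or> norm (p u - p v) = sqrt y) \<longrightarrow>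
      (\<exists>z. \<forall>b\<in>Q. (norm (z - p b))\<^sup>2 = g b)"
    by (rule common_apex_lengths[OF assms(6,7), THEN exE])
  obtain zx where zx: "\<forall>b\<in>Q. (norm (zx - px b))\<^sup>2 = g b"
    using g px px_uv by blast
  obtain zy where zy: "\<forall>b\<in>Q. (norm (zy - py b))\<^sup>2 = g b"
    using g py py_uv by blast
  define l' where "l' e = (if e \<subseteq> W then l e else sum g (e \<inter> W))" for e
  define extend where "extend p z w = (if w \<in> W then p w else z)" for p :: "'a \<Rightarrow> real^'d" and z w
  have rx: "realization V E l' (extend px zx)"
    unfolding l'_def extend_def using px zx boundary by (rule realization_cone_extension)
  have ry: "realization V E l' (extend py zy)"
    unfolding l'_def extend_def using py zy boundary by (rule realization_cone_extension)
  have "0 \<le> l' e" if "e \<in> E" for e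
    using doubletons that realization_edge_nonneg[OF rx] by fastforce
  then have "convex (Omega D V E l' u v)"
    using sip by (simp add: has_SIP_def)
  moreover have "x = (norm (extend px zx u - extend px zx v))\<^sup>2"
    and "y = (norm (extend py zy u - extend py zy v))\<^sup>2"
    using px_uv py_uv \<open>0 \<le> x\<close> \<open>0 \<le> y\<close> assms(2,3) by (simp_all add: extend_def)
  then have "x \<in> Omega D V E l' u v" and "y \<in> Omega D V E l' u v"
    using rx ry unfolding Omega_def by blast+
  ultimately have "\<mu> *\<^sub>R x + \<nu> *\<^sub>R y \<in> Omega D V E l' u v"
    using \<mu>\<nu> by (blast dest: convexD)
  then obtain q :: "'a \<Rightarrow> real^'d" where q: "realization V E l' q"
    and "\<mu> *\<^sub>R x + \<nu> *\<^sub>R y = (norm (q u - q v))\<^sup>2"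
    by (auto simp: Omega_def)
  moreover have "realization W (induced_edges E W) l q"
    using q by (auto simp: realization_def induced_edges_def l'_def)
  ultimately show "\<mu> *\<^sub>R x + \<nu> *\<^sub>R y \<in> Omega D W (induced_edges E W) l u v"
    by (auto simp: Omega_def)
qed

lemma has_SIP_atom:
  fixes D :: "'d::finite itself"
  assumes "simple_graph V E" and "u \<in> V" and "v \<in> V" and "u \<noteq> v" and "{u, v} \<notin> E"
    and "has_SIP D V E u v"
    and "atom_of V (insert {u, v} E) A" and "u \<in> A" and "v \<in> A"
  shows "has_SIP D A (induced_edges (insert {u, v} E) A - {{u, v}}) u v"
  using assms
proof (induction "card V" arbitrary: V E rule: less_induct)
  case less
  let ?F = "insert {u, v} E"
  have graph: "simple_graph V ?F"
    using less.prems(1-4) by (rule simple_graph_insert)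
  show ?case
  proof (cases "is_atom V ?F")
    case True
    then have "A = V"
      using atom_of_atom_iff[OF graph] less.prems(7) by blast
    moreover have "induced_edges ?F V - {{u, v}} = E"
      using induced_edges_self[OF graph] less.prems(5) by auto
    ultimately show ?thesis
      using less.prems(6) by simp
  next
    case False
    then obtain K where K: "clique_separator V ?F K"
      using less.prems(2) by (auto simp: is_atom_def)
    obtain W where AW: "A \<subseteq> W" and WV: "W \<subset> V" and KW: "K \<subseteq> W"
      and boundary: "\<forall>a b. {a, b} \<in> ?F \<longrightarrow> a \<notin> W \<longrightarrow> b \<in> W \<longrightarrow> b \<in> K"
      using atom_in_clique_separated_side[OF graph less.prems(7) K] by blast
    have uv: "u \<in> W" "v \<in> W"
      using AW less.prems(8,9) by auto
    have induced: "induced_edges ?F W = insert {u, v} (induced_edges E W)"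
      using uv by (rule induced_edges_insert)
    have card: "card W < card V"
      using less.prems(1) WV by (simp add: simple_graph_def psubset_card_mono)
    have graph_W: "simple_graph W (induced_edges E W)"
      using less.prems(1) WV by (simp add: simple_graph_induced_edges)
    have nonedge_W: "{u, v} \<notin> induced_edges E W"
      using less.prems(5) by (simp add: induced_edges_def)
    have SIP_W: "has_SIP D W (induced_edges E W) u v"
    proof (rule has_SIP_induced_edges[OF less.prems(6) uv _ _ KW])
      show "\<forall>e\<in>E. \<exists>a b. e = {a, b}"
        using less.prems(1) unfolding simple_graph_def by blast
      show "\<And>a b. {a, b} \<in> E \<Longrightarrow> a \<notin> W \<Longrightarrow> b \<in> W \<Longrightarrow> b \<in> K"
        using boundary by blast
      show "\<forall>x\<in>K. \<forall>y\<in>K. x \<noteq> y \<longrightarrow> {x, y} \<in> ?F"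
        using K by (simp add: clique_separator_def is_clique_def)
    qed
    have atom_W: "atom_of W (insert {u, v} (induced_edges E W)) A"
      using atom_of_induced[OF less.prems(7) AW] WV by (simp add: induced)
    have "has_SIP D A (induced_edges (insert {u, v} (induced_edges E W)) A - {{u, v}}) u v"
      by (rule less.hyps[OF card graph_W uv less.prems(4) nonedge_W SIP_W atom_W less.prems(8,9)])
    then show ?thesis
      using AW by (simp add: induced[symmetric] induced_edges_induced_edges)
  qed
qed

theorem mainTheorem9:
  fixes V :: "'a set" and E :: "'a set set" and u v :: 'a
    and D :: "'d::finite itself"
  assumes "simple_graph V E"
    and "u \<in> V" and "v \<in> V" and "u \<noteq> v" and "{u, v} \<notin> E"
  shows "has_SIP D V E u v \<longleftrightarrow>
    (\<forall>A. atom_of V (insert {u, v} E) A \<and> u \<in> A \<and> v \<in> A \<longrightarrow>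
       has_SIP D A (induced_edges (insert {u, v} E) A - {{u, v}}) u v)"
proof (intro iffI allI impI)
  show "has_SIP D A (induced_edges (insert {u, v} E) A - {{u, v}}) u v"
    if "has_SIP D V E u v" and "atom_of V (insert {u, v} E) A \<and> u \<in> A \<and> v \<in> A" for A
    using has_SIP_atom[OF assms] that by blast
qed (rule has_SIP_if_atoms[OF assms])

end
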